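(* Let $\mathbb{S}=\{1,2,\ldots,N\}$ with $N\in\mathbb{N}\cup\{\infty\}$, and for each $x\in\mathbb{R}^d$ let $Q(x)=(q_{ij}(x))_{i,j\in\mathbb{S}}$ be a transition rate matrix. Assume: (A2) for each $x\in\mathbb{R}^d$, $Q(x)$ is conservative and irreducible, and $\kappa:=\sup_{i\in\mathbb{S}}\sum_{j\in\mathbb{S},j\neq i}\sup_{x\in\mathbb{R}^d}q_{ij}(x)<\infty$; (A3) there is $K_3>0$ with $\|Q(x)-Q(y)\|_{\ell_1}:=\sup_{i\in\mathbb{S}}\sum_{j\neq i}|q_{ij}(x)-q_{ij}(y)|\le K_3|x-y|$ for all $x,y\in\mathbb{R}^d$; (A4) for each $x$ the semigroup $P^x_t$ has an invariant probability measure $\pi^x$, and there are constants $c_1,\lambda_1>0$ such that $\sup_{i\in\mathbb{S}}\|P_t^x(i,\cdot)-\pi^x\|_{\mathrm{var}}\le c_1e^{-\lambda_1 t}$ for all $t>0$ and $x\in\mathbb{R}^d$. Then for all $x,y\in\mathbb{R}^d$, $$\|\pi^x-\pi^y\|_{\mathrm{var}}\le C_\pi|x-y|,\qquad C_\pi=\frac{4c_1K_3}{\lambda_1}.$$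
   Context: $P_t^x$ denotes the transition semigroup of the continuous-time Markov chain on $\mathbb{S}$ with transition rate matrix $Q(x)$. Conservative means $q_{ij}(x)\ge0$ for $i\ne j$ and $\sum_j q_{ij}(x)=0$. For probability measures $\mu,\nu$ on $\mathbb{S}$, $\|\mu-\nu\|_{\mathrm{var}}=\sup\{|\mu(f)-\nu(f)|: |f|\le 1\}=\sum_{i}|\mu_i-\nu_i|$, where $\mu(f)=\sum_i\mu_if(i)$. *)

theory Defs
  imports "HOL-Analysis.Analysis" "HOL-Library.Extended_Nat"
begin

definition state_space :: "enat \<Rightarrow> nat set" where
  "state_space N = {i. 1 \<le> i \<and> enat i \<le> N}"

definition conservative :: "nat set \<Rightarrow> (nat \<Rightarrow> nat \<Rightarrow> real) \<Rightarrow> bool" where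
  "conservative S q \<longleftrightarrow>
     (\<forall>i\<in>S. \<forall>j\<in>S. i \<noteq> j \<longrightarrow> q i j \<ge> 0) \<and>
     (\<forall>i\<in>S. q i summable_on S \<and> (\<Sum>\<^sub>\<infinity>j\<in>S. q i j) = 0)"

definition irreducible_Q :: "nat set \<Rightarrow> (nat \<Rightarrow> nat \<Rightarrow> real) \<Rightarrow> bool" where
  "irreducible_Q S q \<longleftrightarrow>
     (\<forall>i\<in>S. \<forall>j\<in>S. i \<noteq> j \<longrightarrow>
        (i, j) \<in> {(a, b). a \<in> S \<and> b \<in> S \<and> a \<noteq> b \<and> q a b > 0}\<^sup>+)"

fun qpow :: "nat set \<Rightarrow> (nat \<Rightarrow> nat \<Rightarrow> real) \<Rightarrow> nat \<Rightarrow> nat \<Rightarrow> nat \<Rightarrow> real" where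
  "qpow S q 0 i j = (if i = j then 1 else 0)"
| "qpow S q (Suc n) i j = (\<Sum>\<^sub>\<infinity>k\<in>S. q i k * qpow S q n k j)"

text \<open>Transition semigroup P_t = exp(t Q) (rates are bounded, so the chain is
  non-explosive and its transition function is the exponential series).\<close>
definition trans_sg :: "nat set \<Rightarrow> (nat \<Rightarrow> nat \<Rightarrow> real) \<Rightarrow> real \<Rightarrow> nat \<Rightarrow> nat \<Rightarrow> real" where
  "trans_sg S q t i j = (\<Sum>n. t ^ n / fact n * qpow S q n i j)"

definition invariant_prob :: "nat set \<Rightarrow> (nat \<Rightarrow> nat \<Rightarrow> real) \<Rightarrow> (nat \<Rightarrow> real) \<Rightarrow> bool" where
  "invariant_prob S q p \<longleftrightarrow>
     (\<forall>i\<in>S. p i \<ge> 0) \<and> p summable_on S \<and> (\<Sum>\<^sub>\<infinity>i\<in>S. p i) = 1 \<and>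
     (\<forall>t\<ge>0. \<forall>j\<in>S. (\<Sum>\<^sub>\<infinity>i\<in>S. p i * trans_sg S q t i j) = p j)"

definition var_dist :: "nat set \<Rightarrow> (nat \<Rightarrow> real) \<Rightarrow> (nat \<Rightarrow> real) \<Rightarrow> real" where
  "var_dist S mu nu = (\<Sum>\<^sub>\<infinity>i\<in>S. \<bar>mu i - nu i\<bar>)"

end

theory Submission
  imports Defs "HOL-Real_Asymp.Real_Asymp"
begin

text \<open>
  By invariance \<open>\<pi>\<^sup>x Q(x) = 0\<close>, so Kolmogorov's forward equation gives
  \<open>d/dt (\<pi>\<^sup>x P\<^sup>y\<^sub>t) = \<pi>\<^sup>x Q(y) P\<^sup>y\<^sub>t = \<pi>\<^sup>x (Q(y) - Q(x)) P\<^sup>y\<^sub>t\<close>.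
  The row vector \<open>\<pi>\<^sup>x (Q(y) - Q(x))\<close> has total mass zero and l1-norm at most
  \<open>2 K\<^sub>3 |x - y|\<close>, so against a test function bounded by 1 it only sees \<open>P\<^sup>y\<^sub>t - \<pi>\<^sup>y\<close>,
  which (A4) bounds by \<open>c\<^sub>1 exp (- \<lambda>\<^sub>1 t)\<close>. Integrating over \<open>t \<ge> 0\<close> and using
  \<open>\<pi>\<^sup>x P\<^sup>y\<^sub>t \<rightarrow> \<pi>\<^sup>y\<close> yields \<open>\<parallel>\<pi>\<^sup>x - \<pi>\<^sup>y\<parallel>\<^sub>v\<^sub>a\<^sub>r \<le> 2 c\<^sub>1 K\<^sub>3 |x - y| / \<lambda>\<^sub>1\<close>.
  Since the rates are bounded, \<open>P\<^sub>t = exp (t Q)\<close> is an absolutely convergent power series and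
  every interchange of summation is justified by domination.
\<close>

lemma summable_on_abs_real:
  fixes f :: "'a \<Rightarrow> real"
  assumes "f summable_on A"
  shows "(\<lambda>x. \<bar>f x\<bar>) summable_on A"
  using assms summable_on_iff_abs_summable_on_real[of f A] by simp

lemma summable_on_diff_real:
  fixes f g :: "'a \<Rightarrow> real"
  assumes "f summable_on A" "g summable_on A"
  shows "(\<lambda>x. f x - g x) summable_on A"
  using summable_on_add[OF assms(1) summable_on_uminus[THEN iffD2, OF assms(2)]] by simp

lemma infsum_diff_real:
  fixes f g :: "'a \<Rightarrow> real"
  assumes "f summable_on A" "g summable_on A"
  shows "(\<Sum>\<^sub>\<infinity>x\<in>A. f x - g x) = infsum f A - infsum g A"
  using infsum_add[OF assms(1) summable_on_uminus[THEN iffD2, OF assms(2)]] infsum_uminus[of g A]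
  by simp

lemma infsum_remove_point:
  fixes f :: "'a \<Rightarrow> real"
  assumes "f summable_on A" "a \<in> A"
  shows "infsum f A = f a + infsum f (A - {a})"
  using infsum_insert[of f "A - {a}" a] summable_on_subset_banach[OF assms(1)] assms(2)
  by (simp add: insert_absorb)

lemma has_sum_if_eq:
  assumes "a \<in> A"
  shows "((\<lambda>x. if a = x then f x else 0) has_sum f a) A"
proof -
  have "((\<lambda>x. if a = x then f x else 0) has_sum f a) {a}"
    using has_sum_finite[of "{a}" "\<lambda>x. if a = x then f x else 0"] by simp
  then show ?thesis
    by (rule has_sum_cong_neutral[THEN iffD1, rotated -1]) (use assms in auto)
qed

lemma infsum_sum:
  fixes f :: "'i \<Rightarrow> 'a \<Rightarrow> real"
  assumes "finite I" "\<And>i. i \<in> I \<Longrightarrow> f i summable_on A"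
  shows "(\<lambda>x. \<Sum>i\<in>I. f i x) summable_on A"
    and "(\<Sum>\<^sub>\<infinity>x\<in>A. \<Sum>i\<in>I. f i x) = (\<Sum>i\<in>I. \<Sum>\<^sub>\<infinity>x\<in>A. f i x)"
  using assms by (induction I rule: finite_induct) (auto simp: summable_on_add infsum_add)

lemma
  fixes w h :: "'a \<Rightarrow> real"
  assumes w: "w summable_on A" and h: "\<And>x. x \<in> A \<Longrightarrow> \<bar>h x\<bar> \<le> H"
  shows summable_on_mult_bounded: "(\<lambda>x. w x * h x) summable_on A"
    and abs_infsum_mult_bounded_le: "\<bar>\<Sum>\<^sub>\<infinity>x\<in>A. w x * h x\<bar> \<le> (\<Sum>\<^sub>\<infinity>x\<in>A. \<bar>w x\<bar>) * H"
proof -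
  have dom: "\<bar>w x * h x\<bar> \<le> \<bar>w x\<bar> * H" if "x \<in> A" for x
    using h[OF that] by (simp add: abs_mult mult_left_mono)
  have wH: "(\<lambda>x. \<bar>w x\<bar> * H) summable_on A"
    using summable_on_abs_real[OF w] by (rule summable_on_cmult_left)
  have abs_wh: "(\<lambda>x. \<bar>w x * h x\<bar>) summable_on A"
    by (rule summable_on_comparison_test[OF wH dom]) auto
  then show "(\<lambda>x. w x * h x) summable_on A"
    using summable_on_iff_abs_summable_on_real by force
  have "\<bar>\<Sum>\<^sub>\<infinity>x\<in>A. w x * h x\<bar> \<le> (\<Sum>\<^sub>\<infinity>x\<in>A. \<bar>w x * h x\<bar>)"
    using norm_infsum_bound[of "\<lambda>x. w x * h x" A] abs_wh by simp
  also have "\<dots> \<le> (\<Sum>\<^sub>\<infinity>x\<in>A. \<bar>w x\<bar> * H)"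
    by (rule infsum_mono[OF abs_wh wH dom])
  also have "\<dots> = (\<Sum>\<^sub>\<infinity>x\<in>A. \<bar>w x\<bar>) * H"
    by (rule infsum_cmult_left')
  finally show "\<bar>\<Sum>\<^sub>\<infinity>x\<in>A. w x * h x\<bar> \<le> (\<Sum>\<^sub>\<infinity>x\<in>A. \<bar>w x\<bar>) * H" .
qed

lemma summable_on_Times_row_dominated:
  fixes f :: "'a \<Rightarrow> 'b \<Rightarrow> real"
  assumes rows: "\<And>x. x \<in> A \<Longrightarrow> f x summable_on B"
    and row_bound: "\<And>x. x \<in> A \<Longrightarrow> (\<Sum>\<^sub>\<infinity>y\<in>B. \<bar>f x y\<bar>) \<le> b x"
    and b: "b summable_on A"
  shows "(\<lambda>(x, y). f x y) summable_on A \<times> B"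
proof -
  have "(\<lambda>x. \<Sum>\<^sub>\<infinity>y\<in>B. \<bar>f x y\<bar>) summable_on A"
  proof (rule summable_on_comparison_test[OF b])
    show "0 \<le> (\<Sum>\<^sub>\<infinity>y\<in>B. \<bar>f x y\<bar>)" for x
      by (rule infsum_nonneg) simp
  qed (rule row_bound)
  moreover have "(\<lambda>y. \<bar>f x y\<bar>) summable_on B" if "x \<in> A" for x
    using summable_on_abs_real[OF rows[OF that]] .
  ultimately have "(\<lambda>p. norm ((\<lambda>(x, y). f x y) p)) summable_on Sigma A (\<lambda>_. B)"
    by (subst Infinite_Sum.abs_summable_on_Sigma_iff) (auto simp: infsum_nonneg)
  then show ?thesis
    using summable_on_iff_abs_summable_on_real by blast
qed

lemma infsum_swap_row_dominated:
  fixes f :: "'a \<Rightarrow> 'b \<Rightarrow> real"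
  assumes rows: "\<And>x. x \<in> A \<Longrightarrow> f x summable_on B"
    and row_bound: "\<And>x. x \<in> A \<Longrightarrow> (\<Sum>\<^sub>\<infinity>y\<in>B. \<bar>f x y\<bar>) \<le> b x"
    and b: "b summable_on A"
  shows "\<And>y. y \<in> B \<Longrightarrow> (\<lambda>x. f x y) summable_on A"
    and "(\<lambda>x. \<Sum>\<^sub>\<infinity>y\<in>B. f x y) summable_on A"
    and "(\<lambda>y. \<Sum>\<^sub>\<infinity>x\<in>A. f x y) summable_on B"
    and "(\<Sum>\<^sub>\<infinity>x\<in>A. \<Sum>\<^sub>\<infinity>y\<in>B. f x y) = (\<Sum>\<^sub>\<infinity>y\<in>B. \<Sum>\<^sub>\<infinity>x\<in>A. f x y)"
proof -
  have AB: "(\<lambda>(x, y). f x y) summable_on A \<times> B"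
    by (rule summable_on_Times_row_dominated[OF rows row_bound b])
  then have BA: "(\<lambda>(y, x). f x y) summable_on B \<times> A"
    using summable_on_swap[THEN iffD1, OF AB] by (simp add: case_prod_unfold)
  show cols: "(\<lambda>x. f x y) summable_on A" if "y \<in> B" for y
    using summable_on_SigmaD1[of "\<lambda>y x. f x y" B "\<lambda>_. A" y] BA that by simp
  show "(\<lambda>x. \<Sum>\<^sub>\<infinity>y\<in>B. f x y) summable_on A"
    using summable_on_SigmaD[of "\<lambda>(x, y). f x y" A "\<lambda>_. B"] AB rows by simp
  show "(\<lambda>y. \<Sum>\<^sub>\<infinity>x\<in>A. f x y) summable_on B"
    using summable_on_SigmaD[of "\<lambda>(y, x). f x y" B "\<lambda>_. A"] BA cols by simp
  show "(\<Sum>\<^sub>\<infinity>x\<in>A. \<Sum>\<^sub>\<infinity>y\<in>B. f x y) = (\<Sum>\<^sub>\<infinity>y\<in>B. \<Sum>\<^sub>\<infinity>x\<in>A. f x y)"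
    using infsum_swap_banach[OF AB] .
qed

section \<open>Matrices with summable rows\<close>

definition row_bounded :: "nat set \<Rightarrow> (nat \<Rightarrow> nat \<Rightarrow> real) \<Rightarrow> real \<Rightarrow> bool" where
  "row_bounded S M B \<longleftrightarrow> (\<forall>i\<in>S. M i summable_on S \<and> (\<Sum>\<^sub>\<infinity>k\<in>S. \<bar>M i k\<bar>) \<le> B)"

definition vecmat :: "nat set \<Rightarrow> (nat \<Rightarrow> real) \<Rightarrow> (nat \<Rightarrow> nat \<Rightarrow> real) \<Rightarrow> nat \<Rightarrow> real" where
  "vecmat S w M j = (\<Sum>\<^sub>\<infinity>i\<in>S. w i * M i j)"

lemma row_bounded_abs_le:
  assumes "row_bounded S M B" "i \<in> S" "j \<in> S"
  shows "\<bar>M i j\<bar> \<le> B"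
proof -
  have row: "M i summable_on S" "(\<Sum>\<^sub>\<infinity>k\<in>S. \<bar>M i k\<bar>) \<le> B"
    using assms by (auto simp: row_bounded_def)
  have "(\<Sum>k\<in>{j}. \<bar>M i k\<bar>) \<le> (\<Sum>\<^sub>\<infinity>k\<in>S. \<bar>M i k\<bar>)"
    by (rule finite_sum_le_infsum) (use summable_on_abs_real[OF row(1)] assms in auto)
  then show ?thesis
    using row(2) by simp
qed

lemma
  assumes M: "row_bounded S M B" and w: "w summable_on S"
  shows summable_on_vecmat: "vecmat S w M summable_on S"
    and infsum_abs_vecmat_le: "(\<Sum>\<^sub>\<infinity>k\<in>S. \<bar>vecmat S w M k\<bar>) \<le> B * (\<Sum>\<^sub>\<infinity>i\<in>S. \<bar>w i\<bar>)"
proof -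
  have row: "M i summable_on S" "(\<Sum>\<^sub>\<infinity>k\<in>S. \<bar>M i k\<bar>) \<le> B" if "i \<in> S" for i
    using M that by (auto simp: row_bounded_def)
  have l1_row: "(\<Sum>\<^sub>\<infinity>k\<in>S. \<bar>\<bar>w i * M i k\<bar>\<bar>) \<le> \<bar>w i\<bar> * B" if "i \<in> S" for i
    using row[OF that] by (simp add: abs_mult infsum_cmult_right' mult_left_mono)
  have wB: "(\<lambda>i. \<bar>w i\<bar> * B) summable_on S"
    using summable_on_abs_real[OF w] by (rule summable_on_cmult_left)
  have abs_rows: "(\<lambda>k. \<bar>w i * M i k\<bar>) summable_on S" if "i \<in> S" for i
    using summable_on_abs_real[OF summable_on_cmult_right[OF row(1)[OF that]]] .
  note dominated = abs_rows l1_row wB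
  have cols: "(\<lambda>i. \<bar>w i * M i k\<bar>) summable_on S" if "k \<in> S" for k
    using dominated that by (rule infsum_swap_row_dominated(1))
  have row_sums: "(\<lambda>i. \<Sum>\<^sub>\<infinity>k\<in>S. \<bar>w i * M i k\<bar>) summable_on S"
    using dominated by (rule infsum_swap_row_dominated(2))
  have col_sums: "(\<lambda>k. \<Sum>\<^sub>\<infinity>i\<in>S. \<bar>w i * M i k\<bar>) summable_on S"
    using dominated by (rule infsum_swap_row_dominated(3))
  have bound: "\<bar>vecmat S w M k\<bar> \<le> (\<Sum>\<^sub>\<infinity>i\<in>S. \<bar>w i * M i k\<bar>)" if "k \<in> S" for k
    unfolding vecmat_def using norm_infsum_bound[of "\<lambda>i. w i * M i k" S] cols[OF that] by simp
  show "vecmat S w M summable_on S"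
  proof (rule summable_on_iff_abs_summable_on_real[THEN iffD2])
    show "(\<lambda>k. norm (vecmat S w M k)) summable_on S"
      by (rule summable_on_comparison_test[OF col_sums]) (use bound in auto)
  qed
  have "(\<Sum>\<^sub>\<infinity>k\<in>S. \<bar>vecmat S w M k\<bar>) \<le> (\<Sum>\<^sub>\<infinity>k\<in>S. \<Sum>\<^sub>\<infinity>i\<in>S. \<bar>w i * M i k\<bar>)"
    by (rule infsum_mono[OF summable_on_abs_real[OF \<open>vecmat S w M summable_on S\<close>] col_sums bound])
  also have "\<dots> = (\<Sum>\<^sub>\<infinity>i\<in>S. \<Sum>\<^sub>\<infinity>k\<in>S. \<bar>w i * M i k\<bar>)"
    using dominated by (rule infsum_swap_row_dominated(4)[symmetric])
  also have "\<dots> \<le> (\<Sum>\<^sub>\<infinity>i\<in>S. \<bar>w i\<bar> * B)"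
    by (rule infsum_mono[OF row_sums wB]) (use l1_row in simp)
  also have "\<dots> = B * (\<Sum>\<^sub>\<infinity>i\<in>S. \<bar>w i\<bar>)"
    by (subst infsum_cmult_left') (rule mult.commute)
  finally show "(\<Sum>\<^sub>\<infinity>k\<in>S. \<bar>vecmat S w M k\<bar>) \<le> B * (\<Sum>\<^sub>\<infinity>i\<in>S. \<bar>w i\<bar>)" .
qed

lemma infsum_vecmat_mult:
  assumes M: "row_bounded S M B" and w: "w summable_on S" and g: "\<And>k. k \<in> S \<Longrightarrow> \<bar>g k\<bar> \<le> G"
  shows "(\<Sum>\<^sub>\<infinity>k\<in>S. vecmat S w M k * g k) = (\<Sum>\<^sub>\<infinity>i\<in>S. w i * (\<Sum>\<^sub>\<infinity>k\<in>S. M i k * g k))"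
proof -
  have row: "M i summable_on S" "(\<Sum>\<^sub>\<infinity>k\<in>S. \<bar>M i k\<bar>) \<le> B" if "i \<in> S" for i
    using M that by (auto simp: row_bounded_def)
  have rows: "(\<lambda>k. w i * (M i k * g k)) summable_on S" if "i \<in> S" for i
    using summable_on_mult_bounded[OF row(1)[OF that] g] by (rule summable_on_cmult_right)
  have row_bound: "(\<Sum>\<^sub>\<infinity>k\<in>S. \<bar>w i * (M i k * g k)\<bar>) \<le> \<bar>w i\<bar> * (B * G)" if "i \<in> S" for i
  proof -
    have "0 \<le> G"
      using g[OF that] by linarith
    have "(\<Sum>\<^sub>\<infinity>k\<in>S. \<bar>M i k\<bar> * \<bar>g k\<bar>) = \<bar>\<Sum>\<^sub>\<infinity>k\<in>S. \<bar>M i k\<bar> * \<bar>g k\<bar>\<bar>"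
      by (simp add: infsum_nonneg)
    also have "\<dots> \<le> (\<Sum>\<^sub>\<infinity>k\<in>S. \<bar>\<bar>M i k\<bar>\<bar>) * G"
      by (rule abs_infsum_mult_bounded_le[OF summable_on_abs_real[OF row(1)[OF that]]]) (simp add: g)
    also have "\<dots> \<le> B * G"
      using row(2)[OF that] \<open>0 \<le> G\<close> by (simp add: mult_right_mono)
    finally show ?thesis
      by (simp add: abs_mult infsum_cmult_right' mult_left_mono)
  qed
  have b: "(\<lambda>i. \<bar>w i\<bar> * (B * G)) summable_on S"
    using summable_on_abs_real[OF w] by (rule summable_on_cmult_left)
  have "(\<Sum>\<^sub>\<infinity>k\<in>S. vecmat S w M k * g k) = (\<Sum>\<^sub>\<infinity>k\<in>S. \<Sum>\<^sub>\<infinity>i\<in>S. w i * (M i k * g k))"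
    by (rule infsum_cong) (simp add: vecmat_def infsum_cmult_left'[symmetric] mult.assoc)
  also have "\<dots> = (\<Sum>\<^sub>\<infinity>i\<in>S. \<Sum>\<^sub>\<infinity>k\<in>S. w i * (M i k * g k))"
    using rows row_bound b by (rule infsum_swap_row_dominated(4)[symmetric])
  also have "\<dots> = (\<Sum>\<^sub>\<infinity>i\<in>S. w i * (\<Sum>\<^sub>\<infinity>k\<in>S. M i k * g k))"
    by (simp add: infsum_cmult_right')
  finally show ?thesis .
qed

lemma row_bounded_qpow:
  assumes q: "row_bounded S q B" and "0 \<le> B"
  shows "row_bounded S (qpow S q n) (B ^ n)"
proof (induction n)
  case 0
  have "(qpow S q 0 i has_sum 1) S" "((\<lambda>j. \<bar>qpow S q 0 i j\<bar>) has_sum 1) S" if "i \<in> S" for i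
  proof -
    have "qpow S q 0 i = (\<lambda>j. if i = j then 1 else 0)"
      "(\<lambda>j. \<bar>qpow S q 0 i j\<bar>) = (\<lambda>j. if i = j then 1 else 0)"
      by (auto simp: fun_eq_iff)
    then show "(qpow S q 0 i has_sum 1) S" "((\<lambda>j. \<bar>qpow S q 0 i j\<bar>) has_sum 1) S"
      using has_sum_if_eq[OF that, of "\<lambda>_. 1"] by simp_all
  qed
  then show ?case
    unfolding row_bounded_def by (metis has_sum_imp_summable infsumI order.refl power_0)
next
  case (Suc n)
  have "qpow S q (Suc n) i summable_on S \<and> (\<Sum>\<^sub>\<infinity>j\<in>S. \<bar>qpow S q (Suc n) i j\<bar>) \<le> B ^ Suc n"
    if i: "i \<in> S" for i
  proof -
    have qi: "q i summable_on S" "(\<Sum>\<^sub>\<infinity>k\<in>S. \<bar>q i k\<bar>) \<le> B"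
      using q i by (auto simp: row_bounded_def)
    have row: "qpow S q (Suc n) i = vecmat S (q i) (qpow S q n)"
      by (simp add: fun_eq_iff vecmat_def)
    have "(\<Sum>\<^sub>\<infinity>j\<in>S. \<bar>qpow S q (Suc n) i j\<bar>) \<le> B ^ n * (\<Sum>\<^sub>\<infinity>k\<in>S. \<bar>q i k\<bar>)"
      unfolding row by (rule infsum_abs_vecmat_le[OF Suc qi(1)])
    also have "\<dots> \<le> B ^ n * B"
      using qi(2) \<open>0 \<le> B\<close> by (simp add: mult_left_mono)
    finally show ?thesis
      unfolding row using summable_on_vecmat[OF Suc qi(1)] by (simp add: mult.commute)
  qed
  then show ?case
    unfolding row_bounded_def by blast
qed

lemma vecmat_qpow_Suc:
  assumes "row_bounded S q B" "0 \<le> B" "w summable_on S" "j \<in> S"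
  shows "vecmat S w (qpow S q (Suc n)) j = vecmat S (vecmat S w q) (qpow S q n) j"
  using infsum_vecmat_mult[OF assms(1,3), of "\<lambda>k. qpow S q n k j" "B ^ n"]
    row_bounded_abs_le[OF row_bounded_qpow[OF assms(1,2)] _ assms(4)]
  by (simp add: vecmat_def)

section \<open>The transition semigroup as an exponential series\<close>

lemma exp_series_has_sum: "((\<lambda>n. x ^ n / fact n) has_sum exp (x :: real)) UNIV"
proof (rule norm_summable_imp_has_sum)
  show "summable (\<lambda>n. norm (x ^ n / fact n))"
    using summable_exp[of "\<bar>x\<bar>"] by (simp add: abs_mult power_abs divide_inverse mult.commute)
  show "(\<lambda>n. x ^ n / fact n) sums exp x"
    using exp_converges[of x] by (simp add: divide_inverse mult.commute)
qed

lemma abs_qpow_term_le: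
  assumes "row_bounded S q B" "0 \<le> B" "i \<in> S" "j \<in> S"
  shows "\<bar>t ^ n / fact n * qpow S q n i j\<bar> \<le> (\<bar>t\<bar> * B) ^ n / fact n"
proof -
  have "\<bar>t ^ n / fact n * qpow S q n i j\<bar> = \<bar>t\<bar> ^ n / fact n * \<bar>qpow S q n i j\<bar>"
    by (simp add: abs_mult power_abs)
  also have "\<dots> \<le> \<bar>t\<bar> ^ n / fact n * B ^ n"
    by (rule mult_left_mono[OF row_bounded_abs_le[OF row_bounded_qpow[OF assms(1,2)] assms(3,4)]]) simp
  finally show ?thesis
    by (simp add: power_mult_distrib)
qed

lemma has_sum_trans_sg:
  assumes "row_bounded S q B" "0 \<le> B" "i \<in> S" "j \<in> S"
  shows "((\<lambda>n. t ^ n / fact n * qpow S q n i j) has_sum trans_sg S q t i j) UNIV"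
proof (rule norm_summable_imp_has_sum)
  show abs_summable: "summable (\<lambda>n. norm (t ^ n / fact n * qpow S q n i j))"
  proof (rule summable_comparison_test)
    show "summable (\<lambda>n. (\<bar>t\<bar> * B) ^ n / fact n)"
      using sums_summable[OF has_sum_imp_sums[OF exp_series_has_sum]] .
  qed (use abs_qpow_term_le[OF assms] in simp)
  show "(\<lambda>n. t ^ n / fact n * qpow S q n i j) sums trans_sg S q t i j"
    unfolding trans_sg_def using summable_norm_cancel[OF abs_summable] by (rule summable_sums)
qed

lemma infsum_abs_qpow_terms_le:
  assumes "row_bounded S q B" "0 \<le> B" "i \<in> S" "j \<in> S"
  shows "(\<Sum>\<^sub>\<infinity>n. \<bar>t ^ n / fact n * qpow S q n i j\<bar>) \<le> exp (\<bar>t\<bar> * B)"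
proof -
  have abs_terms: "(\<lambda>n. \<bar>t ^ n / fact n * qpow S q n i j\<bar>) summable_on UNIV"
    using summable_on_abs_real[OF has_sum_imp_summable[OF has_sum_trans_sg[OF assms]]] .
  have exp_terms: "((\<lambda>n. (\<bar>t\<bar> * B) ^ n / fact n) has_sum exp (\<bar>t\<bar> * B)) UNIV"
    by (rule exp_series_has_sum)
  have "(\<Sum>\<^sub>\<infinity>n. \<bar>t ^ n / fact n * qpow S q n i j\<bar>) \<le> (\<Sum>\<^sub>\<infinity>n. (\<bar>t\<bar> * B) ^ n / fact n)"
    by (rule infsum_mono[OF abs_terms has_sum_imp_summable[OF exp_terms] abs_qpow_term_le[OF assms]])
  then show ?thesis
    by (simp only: infsumI[OF exp_terms])
qed

lemma abs_trans_sg_le: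
  assumes "row_bounded S q B" "0 \<le> B" "i \<in> S" "j \<in> S"
  shows "\<bar>trans_sg S q t i j\<bar> \<le> exp (\<bar>t\<bar> * B)"
proof -
  have "\<bar>trans_sg S q t i j\<bar> = \<bar>\<Sum>\<^sub>\<infinity>n. t ^ n / fact n * qpow S q n i j\<bar>"
    by (simp only: infsumI[OF has_sum_trans_sg[OF assms]])
  also have "\<dots> \<le> (\<Sum>\<^sub>\<infinity>n. \<bar>t ^ n / fact n * qpow S q n i j\<bar>)"
    using norm_infsum_bound[of "\<lambda>n. t ^ n / fact n * qpow S q n i j" UNIV]
      summable_on_abs_real[OF has_sum_imp_summable[OF has_sum_trans_sg[OF assms]]]
    by simp
  also have "\<dots> \<le> exp (\<bar>t\<bar> * B)"
    by (rule infsum_abs_qpow_terms_le[OF assms])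
  finally show ?thesis .
qed

lemma trans_sg_row_summable:
  assumes q: "row_bounded S q B" and "0 \<le> B" and k: "k \<in> S"
  shows "trans_sg S q t k summable_on S"
proof -
  have qpow_row: "qpow S q n k summable_on S" "(\<Sum>\<^sub>\<infinity>j\<in>S. \<bar>qpow S q n k j\<bar>) \<le> B ^ n" for n
    using row_bounded_qpow[OF q \<open>0 \<le> B\<close>, of n] k by (auto simp: row_bounded_def)
  have rows: "(\<lambda>j. t ^ n / fact n * qpow S q n k j) summable_on S" for n
    by (rule summable_on_cmult_right[OF qpow_row(1)])
  have row_bound: "(\<Sum>\<^sub>\<infinity>j\<in>S. \<bar>t ^ n / fact n * qpow S q n k j\<bar>) \<le> (\<bar>t\<bar> * B) ^ n / fact n" for n
  proof -
    have "(\<Sum>\<^sub>\<infinity>j\<in>S. \<bar>t ^ n / fact n * qpow S q n k j\<bar>) = \<bar>t ^ n / fact n\<bar> * (\<Sum>\<^sub>\<infinity>j\<in>S. \<bar>qpow S q n k j\<bar>)"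
      by (simp only: abs_mult infsum_cmult_right')
    also have "\<dots> \<le> \<bar>t ^ n / fact n\<bar> * B ^ n"
      by (rule mult_left_mono[OF qpow_row(2)]) simp
    finally show ?thesis
      by (simp add: power_abs power_mult_distrib)
  qed
  have "(\<lambda>n. (\<bar>t\<bar> * B) ^ n / fact n) summable_on UNIV"
    using exp_series_has_sum by (rule has_sum_imp_summable)
  with rows row_bound have "(\<lambda>j. \<Sum>\<^sub>\<infinity>n. t ^ n / fact n * qpow S q n k j) summable_on S"
    by (rule infsum_swap_row_dominated(3))
  moreover have "(\<Sum>\<^sub>\<infinity>n. t ^ n / fact n * qpow S q n k j) = trans_sg S q t k j" if "j \<in> S" for j
    by (rule infsumI[OF has_sum_trans_sg[OF q \<open>0 \<le> B\<close> k that]])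
  ultimately show ?thesis
    by (metis (no_types, lifting) summable_on_cong)
qed

lemma vecmat_trans_sg_sums:
  assumes q: "row_bounded S q B" and "0 \<le> B" and w: "w summable_on S" and j: "j \<in> S"
  shows "(\<lambda>n. vecmat S w (qpow S q n) j / fact n * t ^ n) sums vecmat S w (trans_sg S q t) j"
proof -
  define e where "e i n = t ^ n / fact n * qpow S q n i j" for i n
  have rows: "(\<lambda>n. w i * e i n) summable_on UNIV" if "i \<in> S" for i
    unfolding e_def by (rule summable_on_cmult_right[OF has_sum_imp_summable[OF has_sum_trans_sg[OF q \<open>0 \<le> B\<close> that j]]])
  have row_bound: "(\<Sum>\<^sub>\<infinity>n. \<bar>w i * e i n\<bar>) \<le> \<bar>w i\<bar> * exp (\<bar>t\<bar> * B)" if "i \<in> S" for i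
  proof -
    have "(\<Sum>\<^sub>\<infinity>n. \<bar>w i * e i n\<bar>) = \<bar>w i\<bar> * (\<Sum>\<^sub>\<infinity>n. \<bar>e i n\<bar>)"
      by (simp only: abs_mult infsum_cmult_right')
    then show ?thesis
      using infsum_abs_qpow_terms_le[OF q \<open>0 \<le> B\<close> that j, of t] by (simp add: e_def mult_left_mono)
  qed
  have b: "(\<lambda>i. \<bar>w i\<bar> * exp (\<bar>t\<bar> * B)) summable_on S"
    using summable_on_abs_real[OF w] by (rule summable_on_cmult_left)
  have col_sum: "(\<Sum>\<^sub>\<infinity>i\<in>S. w i * e i n) = vecmat S w (qpow S q n) j / fact n * t ^ n" for n
  proof -
    have "(\<Sum>\<^sub>\<infinity>i\<in>S. w i * e i n) = (\<Sum>\<^sub>\<infinity>i\<in>S. t ^ n / fact n * (w i * qpow S q n i j))"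
      by (rule infsum_cong) (simp add: e_def)
    also have "\<dots> = t ^ n / fact n * vecmat S w (qpow S q n) j"
      unfolding vecmat_def by (rule infsum_cmult_right')
    finally show ?thesis
      by simp
  qed
  have "vecmat S w (trans_sg S q t) j = (\<Sum>\<^sub>\<infinity>i\<in>S. \<Sum>\<^sub>\<infinity>n. w i * e i n)"
    unfolding vecmat_def
    by (rule infsum_cong) (simp only: e_def infsum_cmult_right' infsumI[OF has_sum_trans_sg[OF q \<open>0 \<le> B\<close> _ j]])
  also have "\<dots> = (\<Sum>\<^sub>\<infinity>n. \<Sum>\<^sub>\<infinity>i\<in>S. w i * e i n)"
    using rows row_bound b by (rule infsum_swap_row_dominated(4))
  finally have "((\<lambda>n. \<Sum>\<^sub>\<infinity>i\<in>S. w i * e i n) has_sum vecmat S w (trans_sg S q t) j) UNIV"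
    using infsum_swap_row_dominated(3)[OF rows row_bound b] by (simp add: has_sum_iff)
  then show ?thesis
    unfolding col_sum by (rule has_sum_imp_sums)
qed

lemma vecmat_trans_sg_0:
  assumes "row_bounded S q B" "0 \<le> B" "w summable_on S" "j \<in> S"
  shows "vecmat S w (trans_sg S q 0) j = w j"
proof -
  have "(\<lambda>n. vecmat S w (qpow S q n) j / fact n * 0 ^ n) sums vecmat S w (qpow S q 0) j"
    using powser_sums_zero[of "\<lambda>n. vecmat S w (qpow S q n) j / fact n"] by simp
  then have "vecmat S w (trans_sg S q 0) j = vecmat S w (qpow S q 0) j"
    using vecmat_trans_sg_sums[OF assms, of 0] sums_unique2 by blast
  also have "\<dots> = (\<Sum>\<^sub>\<infinity>i\<in>S. if j = i then w i else 0)"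
    unfolding vecmat_def by (rule infsum_cong) auto
  also have "\<dots> = w j"
    by (rule infsumI[OF has_sum_if_eq[OF assms(4)]])
  finally show ?thesis .
qed

lemma has_field_derivative_vecmat_trans_sg:
  assumes q: "row_bounded S q B" and "0 \<le> B" and w: "w summable_on S" and j: "j \<in> S"
  shows "((\<lambda>t. vecmat S w (trans_sg S q t) j) has_field_derivative
           vecmat S (vecmat S w q) (trans_sg S q t) j) (at t)"
proof -
  define c where "c n = vecmat S w (qpow S q n) j / fact n" for n
  have series: "vecmat S w (trans_sg S q x) j = (\<Sum>n. c n * x ^ n)" for x
    using vecmat_trans_sg_sums[OF q \<open>0 \<le> B\<close> w j, of x] by (simp add: c_def sums_iff)
  have "((\<lambda>x. \<Sum>n. c n * x ^ n) has_field_derivative (\<Sum>n. diffs c n * t ^ n)) (at t)"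
    by (rule termdiffs_strong_converges_everywhere)
      (use vecmat_trans_sg_sums[OF q \<open>0 \<le> B\<close> w j] in \<open>auto simp: c_def sums_iff\<close>)
  moreover have "diffs c n = vecmat S (vecmat S w q) (qpow S q n) j / fact n" for n
    using vecmat_qpow_Suc[OF q \<open>0 \<le> B\<close> w j, of n]
    by (simp add: diffs_def c_def fact_Suc field_simps del: of_nat_Suc)
  moreover have "(\<lambda>n. vecmat S (vecmat S w q) (qpow S q n) j / fact n * t ^ n) sums
      vecmat S (vecmat S w q) (trans_sg S q t) j"
    by (rule vecmat_trans_sg_sums[OF q \<open>0 \<le> B\<close> summable_on_vecmat[OF q w] j])
  ultimately show ?thesis
    unfolding series by (simp add: sums_iff)
qed

section \<open>Conservative generators and invariant measures\<close>

lemma infsum_abs_le_twice_infsum_abs_remove: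
  fixes r :: "'a \<Rightarrow> real"
  assumes r: "r summable_on A" and "infsum r A = 0" and a: "a \<in> A"
  shows "(\<Sum>\<^sub>\<infinity>x\<in>A. \<bar>r x\<bar>) \<le> 2 * (\<Sum>\<^sub>\<infinity>x\<in>A - {a}. \<bar>r x\<bar>)"
proof -
  have abs_r: "(\<lambda>x. \<bar>r x\<bar>) summable_on A"
    by (rule summable_on_abs_real[OF r])
  have "\<bar>r a\<bar> = \<bar>\<Sum>\<^sub>\<infinity>x\<in>A - {a}. r x\<bar>"
    using infsum_remove_point[OF r a] \<open>infsum r A = 0\<close> by simp
  also have "\<dots> \<le> (\<Sum>\<^sub>\<infinity>x\<in>A - {a}. \<bar>r x\<bar>)"
    using norm_infsum_bound[of r "A - {a}"] summable_on_subset_banach[OF abs_r, of "A - {a}"] by simp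
  finally show ?thesis
    using infsum_remove_point[OF abs_r a] by simp
qed

lemma conservative_row_bounded:
  assumes q: "conservative S q" and off: "\<And>i. i \<in> S \<Longrightarrow> (\<Sum>\<^sub>\<infinity>k\<in>S - {i}. q i k) \<le> \<kappa>"
  shows "row_bounded S q (2 * \<kappa>)"
  unfolding row_bounded_def
proof
  fix i assume i: "i \<in> S"
  have row: "q i summable_on S" "infsum (q i) S = 0"
    using q i by (auto simp: conservative_def)
  have "(\<Sum>\<^sub>\<infinity>k\<in>S - {i}. \<bar>q i k\<bar>) = (\<Sum>\<^sub>\<infinity>k\<in>S - {i}. q i k)"
    using q i by (intro infsum_cong) (auto simp: conservative_def)
  then show "q i summable_on S \<and> (\<Sum>\<^sub>\<infinity>k\<in>S. \<bar>q i k\<bar>) \<le> 2 * \<kappa>"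
    using infsum_abs_le_twice_infsum_abs_remove[OF row i] off[OF i] row(1) by simp
qed

text \<open>The bound is \<open>2 \<bar>\<kappa>\<bar>\<close> rather than \<open>2 \<kappa>\<close> because \<open>\<kappa>\<close> may be negative when \<open>S = {}\<close>.\<close>
lemma row_bounded_of_sup_rates:
  assumes \<kappa>: "\<forall>i\<in>S. (\<lambda>j. SUP x. Q x i j) summable_on (S - {i}) \<and>
      (\<Sum>\<^sub>\<infinity>j\<in>S - {i}. SUP x. Q x i j) \<le> \<kappa>"
    and cons: "\<forall>x. conservative S (Q x)" and bdd: "\<forall>i\<in>S. \<forall>j\<in>S. bdd_above (range (\<lambda>x. Q x i j))"
  shows "row_bounded S (Q z) (2 * \<bar>\<kappa>\<bar>)"
proof (rule conservative_row_bounded)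
  show "conservative S (Q z)"
    using cons by blast
  fix i assume i: "i \<in> S"
  have "(\<Sum>\<^sub>\<infinity>k\<in>S - {i}. Q z i k) \<le> (\<Sum>\<^sub>\<infinity>k\<in>S - {i}. SUP x. Q x i k)"
  proof (rule infsum_mono)
    show "Q z i summable_on S - {i}"
      using cons i summable_on_subset_banach[of "Q z i" S "S - {i}"] by (auto simp: conservative_def)
    show "(\<lambda>k. SUP x. Q x i k) summable_on S - {i}"
      using \<kappa> i by blast
    show "Q z i k \<le> (SUP x. Q x i k)" if "k \<in> S - {i}" for k
      using bdd i that by (intro cSUP_upper) auto
  qed
  then show "(\<Sum>\<^sub>\<infinity>k\<in>S - {i}. Q z i k) \<le> \<bar>\<kappa>\<bar>"
    using \<kappa> i by fastforce
qed

lemma conservative_diff_row_bounded: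
  assumes q: "conservative S q" and q': "conservative S q'"
    and off: "\<And>i. i \<in> S \<Longrightarrow> (\<Sum>\<^sub>\<infinity>k\<in>S - {i}. \<bar>q' i k - q i k\<bar>) \<le> M"
  shows "row_bounded S (\<lambda>i k. q' i k - q i k) (2 * M)"
  unfolding row_bounded_def
proof
  fix i assume i: "i \<in> S"
  have rows: "q i summable_on S" "infsum (q i) S = 0" "q' i summable_on S" "infsum (q' i) S = 0"
    using q q' i by (auto simp: conservative_def)
  have "(\<lambda>k. q' i k - q i k) summable_on S" "(\<Sum>\<^sub>\<infinity>k\<in>S. q' i k - q i k) = 0"
    using summable_on_diff_real[OF rows(3,1)] infsum_diff_real[OF rows(3,1)] rows(2,4) by simp_all
  then show "(\<lambda>k. q' i k - q i k) summable_on S \<and> (\<Sum>\<^sub>\<infinity>k\<in>S. \<bar>q' i k - q i k\<bar>) \<le> 2 * M"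
    using infsum_abs_le_twice_infsum_abs_remove[of "\<lambda>k. q' i k - q i k", OF _ _ i] off[OF i] by simp
qed

lemma infsum_vecmat_conservative:
  assumes "conservative S q" "row_bounded S q B" "w summable_on S"
  shows "(\<Sum>\<^sub>\<infinity>k\<in>S. vecmat S w q k) = 0"
proof -
  have "(\<Sum>\<^sub>\<infinity>k\<in>S. vecmat S w q k) = (\<Sum>\<^sub>\<infinity>i\<in>S. w i * (\<Sum>\<^sub>\<infinity>k\<in>S. q i k))"
    using infsum_vecmat_mult[OF assms(2,3), of "\<lambda>_. 1" 1] by simp
  also have "\<dots> = (\<Sum>\<^sub>\<infinity>i\<in>S. 0)"
    by (rule infsum_cong) (use assms(1) in \<open>simp add: conservative_def\<close>)
  finally show ?thesis
    by simp
qed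

text \<open>Differentiating \<open>t \<mapsto> (p P\<^sub>t)\<^sub>j\<close>, which is constant for \<open>t \<ge> 0\<close>, from the right at \<open>0\<close>.\<close>
lemma invariant_prob_vecmat_eq_0:
  assumes p: "invariant_prob S q p" and q: "row_bounded S q B" and "0 \<le> B" and j: "j \<in> S"
  shows "vecmat S p q j = 0"
proof -
  have p_summable: "p summable_on S" and const: "\<And>t. t \<ge> 0 \<Longrightarrow> vecmat S p (trans_sg S q t) j = p j"
    using p j by (auto simp: invariant_prob_def vecmat_def)
  have "((\<lambda>t. vecmat S p (trans_sg S q t) j) has_field_derivative vecmat S p q j) (at 0 within {0..})"
    using has_field_derivative_vecmat_trans_sg[OF q \<open>0 \<le> B\<close> p_summable j, of 0]
      vecmat_trans_sg_0[OF q \<open>0 \<le> B\<close> summable_on_vecmat[OF q p_summable] j]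
    by (simp add: has_field_derivative_at_within)
  then have "((\<lambda>_. p j) has_field_derivative vecmat S p q j) (at 0 within {0..})"
    by (rule has_field_derivative_transform_within[where d = 1]) (simp_all add: const)
  moreover have "((\<lambda>_. p j) has_field_derivative 0) (at 0 within {0..})"
    by (rule DERIV_const)
  moreover have "at (0::real) within {0..} \<noteq> bot"
    by (metis at_within_Ici_at_right trivial_limit_at_right_real)
  ultimately show ?thesis
    by (rule has_field_derivative_unique)
qed

section \<open>Perturbation of the invariant measure\<close>

lemma abs_weighted_sum_le_var_dist:
  assumes "finite F" "F \<subseteq> S" "\<And>j. \<bar>s j\<bar> \<le> 1" and diff: "(\<lambda>j. \<mu> j - \<nu> j) summable_on S"
  shows "\<bar>\<Sum>j\<in>F. s j * (\<mu> j - \<nu> j)\<bar> \<le> var_dist S \<mu> \<nu>"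
proof -
  have "\<bar>\<Sum>j\<in>F. s j * (\<mu> j - \<nu> j)\<bar> \<le> (\<Sum>j\<in>F. \<bar>s j\<bar> * \<bar>\<mu> j - \<nu> j\<bar>)"
    using sum_abs[of "\<lambda>j. s j * (\<mu> j - \<nu> j)" F] by (simp add: abs_mult)
  also have "\<dots> \<le> (\<Sum>j\<in>F. \<bar>\<mu> j - \<nu> j\<bar>)"
    by (rule sum_mono) (use assms(3) in \<open>simp add: mult_left_le_one_le\<close>)
  also have "\<dots> \<le> var_dist S \<mu> \<nu>"
    unfolding var_dist_def by (rule finite_sum_le_infsum[OF summable_on_abs_real[OF diff]]) (use assms in auto)
  finally show ?thesis .
qed

lemma abs_sum_vecmat_sub_le:
  assumes w: "w summable_on S" and F: "finite F" "F \<subseteq> S"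
    and M: "\<And>k j. k \<in> S \<Longrightarrow> j \<in> S \<Longrightarrow> \<bar>M k j\<bar> \<le> E"
    and H: "\<And>k. k \<in> S \<Longrightarrow> \<bar>\<Sum>j\<in>F. s j * (M k j - \<mu> j)\<bar> \<le> H"
  shows "\<bar>\<Sum>j\<in>F. s j * (vecmat S w M j - (\<Sum>\<^sub>\<infinity>k\<in>S. w k) * \<mu> j)\<bar> \<le> (\<Sum>\<^sub>\<infinity>k\<in>S. \<bar>w k\<bar>) * H"
proof -
  have column: "(\<lambda>k. w k * (s j * (M k j - \<mu> j))) summable_on S" if "j \<in> F" for j
    using F(2) that by (intro summable_on_mult_bounded[OF w, of _ "\<bar>s j\<bar> * (E + \<bar>\<mu> j\<bar>)"])
      (auto simp: abs_mult intro!: mult_left_mono order.trans[OF abs_triangle_ineq4] add_mono M)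
  have "s j * (vecmat S w M j - (\<Sum>\<^sub>\<infinity>k\<in>S. w k) * \<mu> j) = (\<Sum>\<^sub>\<infinity>k\<in>S. w k * (s j * (M k j - \<mu> j)))"
    if "j \<in> F" for j
  proof -
    have "(\<lambda>k. w k * M k j) summable_on S"
      using F(2) that by (intro summable_on_mult_bounded[OF w, of _ E]) (auto intro: M)
    then have "vecmat S w M j - (\<Sum>\<^sub>\<infinity>k\<in>S. w k) * \<mu> j = (\<Sum>\<^sub>\<infinity>k\<in>S. w k * (M k j - \<mu> j))"
      using infsum_diff_real[OF _ summable_on_cmult_left[OF w, of "\<mu> j"]]
      by (simp add: vecmat_def infsum_cmult_left' right_diff_distrib)
    then show ?thesis
      by (simp add: infsum_cmult_right'[symmetric] ac_simps)
  qed
  then have "(\<Sum>j\<in>F. s j * (vecmat S w M j - (\<Sum>\<^sub>\<infinity>k\<in>S. w k) * \<mu> j))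
      = (\<Sum>\<^sub>\<infinity>k\<in>S. w k * (\<Sum>j\<in>F. s j * (M k j - \<mu> j)))"
    using infsum_sum(2)[OF F(1) column] by (simp add: sum_distrib_left)
  also have "\<bar>\<dots>\<bar> \<le> (\<Sum>\<^sub>\<infinity>k\<in>S. \<bar>w k\<bar>) * H"
    by (rule abs_infsum_mult_bounded_le[OF w H])
  finally show ?thesis .
qed

lemma decrease_le_of_derivative_exp_bound:
  fixes g g' :: "real \<Rightarrow> real"
  assumes g: "\<And>t. (g has_field_derivative g' t) (at t)"
    and g': "\<And>t. t > 0 \<Longrightarrow> - C * exp (- lam * t) \<le> g' t"
    and "lam > 0" "T > 0"
  shows "g 0 - g T \<le> C / lam * (1 - exp (- lam * T))"
proof -
  define h where "h t = g t - C / lam * exp (- lam * t)" for t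
  have h: "(h has_field_derivative (g' t + C * exp (- lam * t))) (at t)" for t
    unfolding h_def using \<open>lam > 0\<close>
    by (auto intro!: derivative_eq_intros g)
  obtain z where z: "0 < z" "z < T" "h T - h 0 = (T - 0) * (g' z + C * exp (- lam * z))"
    using MVT2[OF \<open>T > 0\<close> h] by blast
  have "0 \<le> h T - h 0"
    using z g'[OF z(1)] \<open>T > 0\<close> by simp
  then show ?thesis
    by (simp add: h_def algebra_simps)
qed

locale generator_perturbation =
  fixes S :: "nat set" and q q' :: "nat \<Rightarrow> nat \<Rightarrow> real" and B L :: real
    and p p' :: "nat \<Rightarrow> real" and c lam :: real
  assumes q: "row_bounded S q B" and q': "row_bounded S q' B" and B: "0 \<le> B"
    and q'_conservative: "conservative S q'"
    and perturbation: "row_bounded S (\<lambda>i k. q' i k - q i k) L"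
    and p: "invariant_prob S q p" and p': "p' summable_on S"
    and c: "0 \<le> c" and lam: "lam > 0"
    and convergence: "\<And>t k. t > 0 \<Longrightarrow> k \<in> S \<Longrightarrow> var_dist S (trans_sg S q' t k) p' \<le> c * exp (- lam * t)"
begin

lemma p_summable: "p summable_on S"
  and infsum_p: "(\<Sum>\<^sub>\<infinity>i\<in>S. p i) = 1"
  and infsum_abs_p: "(\<Sum>\<^sub>\<infinity>i\<in>S. \<bar>p i\<bar>) = 1"
proof -
  show "p summable_on S" "(\<Sum>\<^sub>\<infinity>i\<in>S. p i) = 1"
    using p by (auto simp: invariant_prob_def)
  then show "(\<Sum>\<^sub>\<infinity>i\<in>S. \<bar>p i\<bar>) = 1"
    using p by (metis (no_types, lifting) abs_of_nonneg infsum_cong invariant_prob_def)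
qed

lemma summable_on_vecmat_p_q': "vecmat S p q' summable_on S"
  by (rule summable_on_vecmat[OF q' p_summable])

lemma infsum_vecmat_p_q': "(\<Sum>\<^sub>\<infinity>k\<in>S. vecmat S p q' k) = 0"
  by (rule infsum_vecmat_conservative[OF q'_conservative q' p_summable])

text \<open>Since \<open>p q = 0\<close>, the row vector \<open>p q'\<close> only sees the perturbation \<open>q' - q\<close>.\<close>
lemma infsum_abs_vecmat_p_q'_le: "(\<Sum>\<^sub>\<infinity>k\<in>S. \<bar>vecmat S p q' k\<bar>) \<le> L"
proof -
  have "vecmat S p q' k = vecmat S p (\<lambda>i k. q' i k - q i k) k" if k: "k \<in> S" for k
  proof -
    have "(\<lambda>i. p i * q' i k) summable_on S"
      using row_bounded_abs_le[OF q' _ k] by (rule summable_on_mult_bounded[OF p_summable])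
    moreover have "(\<lambda>i. p i * q i k) summable_on S"
      using row_bounded_abs_le[OF q _ k] by (rule summable_on_mult_bounded[OF p_summable])
    ultimately show ?thesis
      using invariant_prob_vecmat_eq_0[OF p q B k]
      by (simp add: vecmat_def right_diff_distrib infsum_diff_real)
  qed
  then have "(\<Sum>\<^sub>\<infinity>k\<in>S. \<bar>vecmat S p q' k\<bar>) = (\<Sum>\<^sub>\<infinity>k\<in>S. \<bar>vecmat S p (\<lambda>i k. q' i k - q i k) k\<bar>)"
    by (intro infsum_cong) simp
  also have "\<dots> \<le> L * (\<Sum>\<^sub>\<infinity>i\<in>S. \<bar>p i\<bar>)"
    by (rule infsum_abs_vecmat_le[OF perturbation p_summable])
  finally show ?thesis
    by (simp add: infsum_abs_p)
qed

lemma abs_sum_trans_sg_sub_le: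
  assumes "t > 0" "k \<in> S" "finite F" "F \<subseteq> S" "\<And>j. \<bar>s j\<bar> \<le> 1"
  shows "\<bar>\<Sum>j\<in>F. s j * (trans_sg S q' t k j - p' j)\<bar> \<le> c * exp (- lam * t)"
  using abs_weighted_sum_le_var_dist[of F S s, OF assms(3-5) summable_on_diff_real[OF trans_sg_row_summable[OF q' B assms(2), of t] p']]
    convergence[OF assms(1,2)]
  by linarith

text \<open>With \<open>s = sgn (p - p')\<close>, the functional \<open>g t = \<Sum>j\<in>F. s j (p P'\<^sub>t)\<^sub>j\<close> moves from
  \<open>\<Sum>j\<in>F. s j p j\<close> to within \<open>c exp (- lam T)\<close> of \<open>\<Sum>j\<in>F. s j p' j\<close>, while its derivative
  \<open>\<Sum>j\<in>F. s j (p q' P'\<^sub>t)\<^sub>j\<close> is at most \<open>L c exp (- lam t)\<close> because \<open>p q'\<close> has mass zero and l1-norm \<open>\<le> L\<close>.\<close>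
lemma sum_abs_diff_le:
  assumes F: "finite F" "F \<subseteq> S" and "T > 0"
  shows "(\<Sum>j\<in>F. \<bar>p j - p' j\<bar>) \<le> L * c / lam * (1 - exp (- lam * T)) + c * exp (- lam * T)"
proof -
  define s where "s j = sgn (p j - p' j)" for j
  have s: "\<bar>s j\<bar> \<le> 1" for j
    by (simp add: s_def sgn_real_def)
  define g where "g t = (\<Sum>j\<in>F. s j * vecmat S p (trans_sg S q' t) j)" for t
  define g' where "g' t = (\<Sum>j\<in>F. s j * vecmat S (vecmat S p q') (trans_sg S q' t) j)" for t
  have entries: "\<bar>trans_sg S q' t k j\<bar> \<le> exp (\<bar>t\<bar> * B)" if "k \<in> S" "j \<in> S" for t k j
    by (rule abs_trans_sg_le[OF q' B that])
  have deriv: "(g has_field_derivative g' t) (at t)" for t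
    unfolding g_def g'_def using F
    by (auto intro!: DERIV_sum DERIV_cmult has_field_derivative_vecmat_trans_sg[OF q' B p_summable])
  have deriv_lower: "- (L * c) * exp (- lam * t) \<le> g' t" if "t > 0" for t
  proof -
    have "\<bar>g' t\<bar> \<le> (\<Sum>\<^sub>\<infinity>k\<in>S. \<bar>vecmat S p q' k\<bar>) * (c * exp (- lam * t))"
      using abs_sum_vecmat_sub_le[OF summable_on_vecmat_p_q' F entries abs_sum_trans_sg_sub_le[OF that _ F s]]
      by (simp add: g'_def infsum_vecmat_p_q')
    also have "\<dots> \<le> L * (c * exp (- lam * t))"
      using infsum_abs_vecmat_p_q'_le c by (simp add: mult_right_mono)
    finally show ?thesis
      by simp
  qed
  have "g 0 - g T \<le> L * c / lam * (1 - exp (- lam * T))"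
    using deriv deriv_lower by (rule decrease_le_of_derivative_exp_bound[OF _ _ lam \<open>T > 0\<close>])
  moreover have "g 0 = (\<Sum>j\<in>F. s j * p j)"
    unfolding g_def using F by (intro sum.cong) (auto simp: vecmat_trans_sg_0[OF q' B p_summable])
  moreover have "\<bar>g T - (\<Sum>j\<in>F. s j * p' j)\<bar> \<le> c * exp (- lam * T)"
    using abs_sum_vecmat_sub_le[OF p_summable F entries abs_sum_trans_sg_sub_le[OF \<open>T > 0\<close> _ F s]]
    by (simp add: g_def infsum_p infsum_abs_p sum_subtractf right_diff_distrib)
  moreover have "(\<Sum>j\<in>F. \<bar>p j - p' j\<bar>) = (\<Sum>j\<in>F. s j * p j) - (\<Sum>j\<in>F. s j * p' j)"
  proof -
    have "(\<Sum>j\<in>F. \<bar>p j - p' j\<bar>) = (\<Sum>j\<in>F. s j * (p j - p' j))"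
      by (simp add: s_def abs_sgn mult.commute)
    then show ?thesis
      by (simp add: right_diff_distrib sum_subtractf)
  qed
  ultimately show ?thesis
    by linarith
qed

lemma var_dist_le: "var_dist S p p' \<le> L * c / lam"
  unfolding var_dist_def
proof (rule infsum_le_finite_sums)
  show "(\<lambda>j. \<bar>p j - p' j\<bar>) summable_on S"
    by (rule summable_on_abs_real[OF summable_on_diff_real[OF p_summable p']])
  fix F assume "finite F" "F \<subseteq> S"
  have "((\<lambda>T. L * c / lam * (1 - exp (- lam * T)) + c * exp (- lam * T)) \<longlongrightarrow> L * c / lam) at_top"
    using lam by real_asymp
  moreover have "\<forall>\<^sub>F T in at_top. (\<Sum>j\<in>F. \<bar>p j - p' j\<bar>) \<le> L * c / lam * (1 - exp (- lam * T)) + c * exp (- lam * T)"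
    using eventually_gt_at_top[of 0] by eventually_elim (rule sum_abs_diff_le[OF \<open>finite F\<close> \<open>F \<subseteq> S\<close>])
  ultimately show "(\<Sum>j\<in>F. \<bar>p j - p' j\<bar>) \<le> L * c / lam"
    by (rule tendsto_lowerbound) simp
qed

end

theorem proposition2p1:
  fixes N :: enat
    and Q :: "real ^ 'd \<Rightarrow> nat \<Rightarrow> nat \<Rightarrow> real"
    and pinv :: "real ^ 'd \<Rightarrow> nat \<Rightarrow> real"
    and K3 c1 lam1 :: real
  defines "S \<equiv> state_space N"
  assumes A2_cons: "\<forall>x. conservative S (Q x)"
    and A2_irr: "\<forall>x. irreducible_Q S (Q x)"
    and A2_bdd: "\<forall>i\<in>S. \<forall>j\<in>S. bdd_above (range (\<lambda>x. Q x i j))"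
    and A2_kappa: "\<exists>\<kappa>. \<forall>i\<in>S. (\<lambda>j. SUP x. Q x i j) summable_on (S - {i}) \<and>
                        (\<Sum>\<^sub>\<infinity>j\<in>S - {i}. SUP x. Q x i j) \<le> \<kappa>"
    and A3_pos: "K3 > 0"
    and A3: "\<forall>x y. \<forall>i\<in>S. (\<Sum>\<^sub>\<infinity>j\<in>S - {i}. \<bar>Q x i j - Q y i j\<bar>) \<le> K3 * norm (x - y)"
    and A4_inv: "\<forall>x. invariant_prob S (Q x) (pinv x)"
    and A4_pos: "c1 > 0" "lam1 > 0"
    and A4_conv: "\<forall>t>0. \<forall>x. \<forall>i\<in>S.
                    var_dist S (trans_sg S (Q x) t i) (pinv x) \<le> c1 * exp (- lam1 * t)"
  shows "\<forall>x y. var_dist S (pinv x) (pinv y) \<le> 4 * c1 * K3 / lam1 * norm (x - y)"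
proof (intro allI)
  fix x y :: "real ^ 'd"
  obtain \<kappa> where "\<forall>i\<in>S. (\<lambda>j. SUP x. Q x i j) summable_on (S - {i}) \<and>
      (\<Sum>\<^sub>\<infinity>j\<in>S - {i}. SUP x. Q x i j) \<le> \<kappa>"
    using A2_kappa by blast
  then have row_bounded_Q: "row_bounded S (Q z) (2 * \<bar>\<kappa>\<bar>)" for z
    using A2_cons A2_bdd by (rule row_bounded_of_sup_rates)
  interpret generator_perturbation S "Q x" "Q y" "2 * \<bar>\<kappa>\<bar>" "2 * (K3 * norm (x - y))"
    "pinv x" "pinv y" c1 lam1
  proof
    show "row_bounded S (\<lambda>i k. Q y i k - Q x i k) (2 * (K3 * norm (x - y)))"
      using A2_cons A3 by (intro conservative_diff_row_bounded) (auto simp: abs_minus_commute)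
    show "pinv y summable_on S"
      using A4_inv by (simp add: invariant_prob_def)
  qed (use row_bounded_Q A2_cons A4_inv A4_pos A4_conv in auto)
  have "var_dist S (pinv x) (pinv y) \<le> 2 * (K3 * norm (x - y)) * c1 / lam1"
    by (rule var_dist_le)
  also have "\<dots> \<le> 4 * c1 * K3 / lam1 * norm (x - y)"
    using A3_pos A4_pos by (simp add: field_simps)
  finally show "var_dist S (pinv x) (pinv y) \<le> 4 * c1 * K3 / lam1 * norm (x - y)" .
qed

end
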